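(* Let $M=\langle S,A,P,R,s_\iota,\gamma\rangle$ be an MDP, $s^*_1,s^*_2\in S$, and let $\mathcal{M}$ be the bisimulation metric RMDP constructed from $M$ (see context). Then the optimal robust value function $\underline{V}^*_{\mathcal{M}}\colon S\times S\to\mathbb{R}$ of $\mathcal{M}$ is a pseudometric on $S$.
   Context: An MDP $M=\langle S,A,P,R,s_\iota,\gamma\rangle$ has finite states $S$, finite actions $A$, transition function $P\colon S\times A\to\mathcal{D}(S)$, rewards $R\colon S\times A\to\mathbb{R}$, initial state $s_\iota$, discount $\gamma\in(0,1)$. A pseudometric on $X$ is $d\colon X\times X\to[0,\infty)$ with $d(x,x)=0$, $d(x,x')=d(x',x)$ and $d(x,x'')\le d(x,x')+d(x',x'')$. For distributions $\mu,\nu$ on $S$, $\Lambda_{\mu,\nu}$ is the set of couplings: $\vec\lambda\in\mathbb{R}_{\ge0}^{S\times S}$ with $\sum_{t'}\vec\lambda(t,t')=\mu(t)$ and $\sum_t\vec\lambda(t,t')=\nu(t')$. The bisimulation metric RMDP is $\mathcal{M}=\langle S\times S,A,\mathcal{U},\mathcal{R},\langle s^*_1,s^*_2\rangle,\gamma\rangle$, an $(s,a)$-rectangular RMDP with state space $S\times S$, uncertainty set $\mathcal{U}=\prod_{((s,s'),a)}\mathcal{U}_{((s,s'),a)}$ where $\mathcal{U}_{((s,s'),a)}=\Lambda_{P(s,a),P(s',a)}$ (a coupling $\vec\lambda$ is used as the distribution over successor pairs $(t,t')$), and reward $\mathcal{R}(\langle s,s'\rangle,a)=(1-\gamma)|R(s,a)-R(s',a)|$.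 For an RMDP with state space $Q$, actions $A$, rewards $\mathcal R$ and uncertainty set $\mathcal{U}$ inducing transition functions $P_{\vec u}$, the robust value of a policy $\pi$ is $\underline{V}^\pi(q)=\inf_{\vec u\in\mathcal{U}}\mathbb{E}_{\pi,P_{\vec u}}[\sum_{t\ge0}\gamma^t\mathcal{R}(q_t,a_t)\mid q_0=q]$ and the optimal robust value is $\underline{V}^*(q)=\sup_\pi\underline{V}^\pi(q)$ over all (history-dependent, randomized) policies. *)

theory Defs
  imports "HOL-Probability.Probability_Mass_Function"
begin

type_synonym ('q, 'a) policy = "('q \<times> 'a) list \<Rightarrow> 'q \<Rightarrow> 'a pmf"

fun exp_reward ::
  "('q::finite \<Rightarrow> 'a::finite \<Rightarrow> real) \<Rightarrow> ('q \<Rightarrow> 'a \<Rightarrow> 'q pmf) \<Rightarrow> ('q, 'a) policy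
   \<Rightarrow> nat \<Rightarrow> ('q \<times> 'a) list \<Rightarrow> 'q \<Rightarrow> real" where
  "exp_reward Rw Pt pol 0 h q = (\<Sum>a\<in>UNIV. pmf (pol h q) a * Rw q a)"
| "exp_reward Rw Pt pol (Suc n) h q =
     (\<Sum>a\<in>UNIV. pmf (pol h q) a *
        (\<Sum>q'\<in>UNIV. pmf (Pt q a) q' * exp_reward Rw Pt pol n (h @ [(q, a)]) q'))"

definition policy_value ::
  "real \<Rightarrow> ('q::finite \<Rightarrow> 'a::finite \<Rightarrow> real) \<Rightarrow> ('q \<Rightarrow> 'a \<Rightarrow> 'q pmf) \<Rightarrow> ('q, 'a) policy \<Rightarrow> 'q \<Rightarrow> real" where
  "policy_value \<gamma> Rw Pt pol q = (\<Sum>n. \<gamma> ^ n * exp_reward Rw Pt pol n [] q)"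

definition rect_models :: "('q \<Rightarrow> 'a \<Rightarrow> 'q pmf set) \<Rightarrow> ('q \<Rightarrow> 'a \<Rightarrow> 'q pmf) set" where
  "rect_models U = {Pt. \<forall>q a. Pt q a \<in> U q a}"

definition robust_value ::
  "real \<Rightarrow> ('q::finite \<Rightarrow> 'a::finite \<Rightarrow> real) \<Rightarrow> ('q \<Rightarrow> 'a \<Rightarrow> 'q pmf set) \<Rightarrow> ('q, 'a) policy \<Rightarrow> 'q \<Rightarrow> real" where
  "robust_value \<gamma> Rw U pol q = (INF Pt\<in>rect_models U. policy_value \<gamma> Rw Pt pol q)"

definition opt_robust_value ::
  "real \<Rightarrow> ('q::finite \<Rightarrow> 'a::finite \<Rightarrow> real) \<Rightarrow> ('q \<Rightarrow> 'a \<Rightarrow> 'q pmf set) \<Rightarrow> 'q \<Rightarrow> real" where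
  "opt_robust_value \<gamma> Rw U q = (SUP pol\<in>(UNIV :: ('q, 'a) policy set). robust_value \<gamma> Rw U pol q)"

definition couplings :: "'s pmf \<Rightarrow> 's pmf \<Rightarrow> ('s \<times> 's) pmf set" where
  "couplings \<mu> \<nu> = {c. map_pmf fst c = \<mu> \<and> map_pmf snd c = \<nu>}"

definition bisim_reward :: "real \<Rightarrow> ('s \<Rightarrow> 'a \<Rightarrow> real) \<Rightarrow> ('s \<times> 's) \<Rightarrow> 'a \<Rightarrow> real" where
  "bisim_reward \<gamma> R = (\<lambda>(s, s') a. (1 - \<gamma>) * \<bar>R s a - R s' a\<bar>)"

definition bisim_unc :: "('s \<Rightarrow> 'a \<Rightarrow> 's pmf) \<Rightarrow> ('s \<times> 's) \<Rightarrow> 'a \<Rightarrow> ('s \<times> 's) pmf set" where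
  "bisim_unc P = (\<lambda>(s, s') a. couplings (P s a) (P s' a))"

definition pseudometric :: "('x \<Rightarrow> 'x \<Rightarrow> real) \<Rightarrow> bool" where
  "pseudometric d \<longleftrightarrow> (\<forall>x y. d x y \<ge> 0) \<and> (\<forall>x. d x x = 0) \<and> (\<forall>x y. d x y = d y x)
     \<and> (\<forall>x y z. d x z \<le> d x y + d y z)"

end

theory Submission
  imports Defs
begin

(* The optimal robust value of an (s,a)-rectangular robust MDP with finitely many states and
   actions is the fixpoint of the robust Bellman operator
     T f q = max_a (R q a + gamma * inf {E_c f | c in U q a}),
   a gamma-contraction in the sup norm: an adversary that is nearly worst-case against the
   fixpoint bounds every policy from above, and the policy that is greedy for the fixpoint
   attains it.  For the bisimulation RMDP, T f (s, s') is the maximum over actions a of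
   (1 - gamma) |R s a - R s' a| plus gamma times the Kantorovich lifting of f evaluated at
   (P s a, P s' a).  The Kantorovich lifting of a pseudometric is again one (swapped couplings
   give symmetry, the diagonal coupling reflexivity, glued couplings the triangle inequality),
   so T preserves pseudometrics, and so does the pointwise limit of the iterates T^n 0, which
   is the fixpoint. *)

section \<open>Expectations and couplings of finite distributions\<close>

lemma integrable_measure_pmf_finite_type [simp]:
  fixes c :: "'q::finite pmf" and f :: "'q \<Rightarrow> real"
  shows "integrable (measure_pmf c) f"
  by (rule integrable_measure_pmf_finite) simp

lemma expectation_eq_sum_finite:
  fixes c :: "'q::finite pmf"
  shows "measure_pmf.expectation c f = (\<Sum>q\<in>UNIV. pmf c q * f q)"
  by (subst integral_measure_pmf_real[where A = UNIV]) (auto simp: mult.commute)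

lemma expectation_mono_pmf:
  fixes f g :: "'q::finite \<Rightarrow> real"
  assumes "\<And>x. x \<in> set_pmf c \<Longrightarrow> f x \<le> g x"
  shows "measure_pmf.expectation c f \<le> measure_pmf.expectation c g"
  using assms by (intro integral_mono_AE) (auto simp: AE_measure_pmf_iff)

lemma expectation_ge_const:
  fixes f :: "'q::finite \<Rightarrow> real"
  shows "(\<And>x. m \<le> f x) \<Longrightarrow> m \<le> measure_pmf.expectation c f"
  using expectation_mono_pmf[of c "\<lambda>_. m" f] by simp

lemma expectation_le_const:
  fixes f :: "'q::finite \<Rightarrow> real"
  shows "(\<And>x. f x \<le> m) \<Longrightarrow> measure_pmf.expectation c f \<le> m"
  using expectation_mono_pmf[of c f "\<lambda>_. m"] by simp

lemma abs_expectation_le: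
  fixes f :: "'q::finite \<Rightarrow> real"
  shows "(\<And>x. \<bar>f x\<bar> \<le> B) \<Longrightarrow> \<bar>measure_pmf.expectation c f\<bar> \<le> B"
  by (metis abs_le_D1 abs_le_D2 abs_le_iff expectation_ge_const expectation_le_const minus_le_iff)

lemma bdd_below_expectations:
  fixes f :: "'q::finite \<Rightarrow> real"
  shows "bdd_below ((\<lambda>c. measure_pmf.expectation c f) ` C)"
  by (rule bdd_belowI2[of _ "Min (range f)"]) (intro expectation_ge_const Min_le, auto)

lemma pmf_gluing:
  assumes "map_pmf snd c1 = map_pmf fst c2"
  obtains w where "map_pmf fst w = c1" "map_pmf snd w = c2"
    "\<And>p1 p2. (p1, p2) \<in> set_pmf w \<Longrightarrow> snd p1 = fst p2"
proof -
  have "rel_pmf (\<lambda>p y. snd p = y) c1 (map_pmf snd c1)"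
    by (subst pmf.rel_map) (rule rel_pmf_reflI, simp)
  moreover have "rel_pmf (\<lambda>y p. y = fst p) (map_pmf fst c2) c2"
    by (subst pmf.rel_map) (rule rel_pmf_reflI, simp)
  ultimately have "rel_pmf ((\<lambda>p y. snd p = y) OO (\<lambda>y p. y = fst p)) c1 c2"
    unfolding pmf.rel_compp using assms by auto
  then show ?thesis
    by (cases rule: rel_pmf.cases) (auto intro: that simp: OO_def)
qed

section \<open>Pseudometrics and their Kantorovich lifting\<close>

lemma pseudometric_add:
  "pseudometric d \<Longrightarrow> pseudometric e \<Longrightarrow> pseudometric (\<lambda>x y. d x y + e x y)"
  unfolding pseudometric_def by (smt (verit))

lemma pseudometric_scale:
  "0 \<le> c \<Longrightarrow> pseudometric d \<Longrightarrow> pseudometric (\<lambda>x y. c * d x y)"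
  unfolding pseudometric_def by (auto simp flip: distrib_left intro: mult_left_mono)

lemma pseudometric_abs_diff: "pseudometric (\<lambda>x y. \<bar>f x - f y\<bar>)"
  unfolding pseudometric_def by auto

lemma pseudometric_comp: "pseudometric d \<Longrightarrow> pseudometric (\<lambda>x y. d (g x) (g y))"
  unfolding pseudometric_def by blast

lemma pseudometric_Max:
  fixes d :: "'a::finite \<Rightarrow> 'x \<Rightarrow> 'x \<Rightarrow> real"
  assumes "\<And>a. pseudometric (d a)"
  shows "pseudometric (\<lambda>x y. Max (range (\<lambda>a. d a x y)))"
proof -
  have tri: "Max (range (\<lambda>a. d a x z)) \<le> Max (range (\<lambda>a. d a x y)) + Max (range (\<lambda>a. d a y z))"
    for x y z
  proof (rule Max.boundedI)
    fix r assume "r \<in> range (\<lambda>a. d a x z)"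
    then obtain a where "r = d a x z" by blast
    moreover have "d a x z \<le> d a x y + d a y z" using assms[of a] by (simp add: pseudometric_def)
    moreover have "d a x y \<le> Max (range (\<lambda>a. d a x y))" "d a y z \<le> Max (range (\<lambda>a. d a y z))"
      by simp_all
    ultimately show "r \<le> Max (range (\<lambda>a. d a x y)) + Max (range (\<lambda>a. d a y z))" by linarith
  qed auto
  show ?thesis
    unfolding pseudometric_def
  proof (intro conjI allI)
    fix x y z
    have "0 \<le> d undefined x y" using assms by (simp add: pseudometric_def)
    also have "d undefined x y \<le> Max (range (\<lambda>a. d a x y))" by simp
    finally show "0 \<le> Max (range (\<lambda>a. d a x y))" .
    show "Max (range (\<lambda>a. d a x x)) = 0" "Max (range (\<lambda>a. d a x y)) = Max (range (\<lambda>a. d a y x))"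
      using assms by (simp_all add: pseudometric_def)
    show "Max (range (\<lambda>a. d a x z)) \<le> Max (range (\<lambda>a. d a x y)) + Max (range (\<lambda>a. d a y z))"
      by (rule tri)
  qed
qed

lemma pseudometric_limit:
  assumes "\<And>n. pseudometric (d n)" and "\<And>x y. (\<lambda>n. d n x y) \<longlonglongrightarrow> D x y"
  shows "pseudometric D"
  unfolding pseudometric_def
proof (intro conjI allI)
  fix x y z
  show "0 \<le> D x y"
    by (rule LIMSEQ_le_const[OF assms(2)]) (use assms(1) in \<open>auto simp: pseudometric_def\<close>)
  show "D x x = 0"
    using assms LIMSEQ_unique[OF assms(2)[of x x]] by (simp add: pseudometric_def)
  have "(\<lambda>n. d n x y) = (\<lambda>n. d n y x)" using assms(1) by (simp add: pseudometric_def)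
  then show "D x y = D y x" using assms(2) LIMSEQ_unique by metis
  show "D x z \<le> D x y + D y z"
  proof (rule LIMSEQ_le[OF assms(2)])
    show "(\<lambda>n. d n x y + d n y z) \<longlonglongrightarrow> D x y + D y z"
      by (intro tendsto_intros assms(2))
    show "\<exists>N. \<forall>n\<ge>N. d n x z \<le> d n x y + d n y z"
      using assms(1) by (auto simp: pseudometric_def)
  qed
qed

definition kantorovich :: "('s \<Rightarrow> 's \<Rightarrow> real) \<Rightarrow> 's pmf \<Rightarrow> 's pmf \<Rightarrow> real" where
  "kantorovich d \<mu> \<nu> = (INF c\<in>couplings \<mu> \<nu>. measure_pmf.expectation c (case_prod d))"

lemma pair_pmf_in_couplings: "pair_pmf \<mu> \<nu> \<in> couplings \<mu> \<nu>"
  by (simp add: couplings_def map_fst_pair_pmf map_snd_pair_pmf)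

context
  fixes d :: "'s::finite \<Rightarrow> 's \<Rightarrow> real"
begin

lemma kantorovich_le:
  "c \<in> couplings \<mu> \<nu> \<Longrightarrow> kantorovich d \<mu> \<nu> \<le> measure_pmf.expectation c (case_prod d)"
  unfolding kantorovich_def by (rule cINF_lower[OF bdd_below_expectations])

lemma kantorovich_greatest:
  "(\<And>c. c \<in> couplings \<mu> \<nu> \<Longrightarrow> m \<le> measure_pmf.expectation c (case_prod d))
    \<Longrightarrow> m \<le> kantorovich d \<mu> \<nu>"
  unfolding kantorovich_def using pair_pmf_in_couplings by (intro cINF_greatest) auto

lemma kantorovich_nonneg: "(\<And>x y. 0 \<le> d x y) \<Longrightarrow> 0 \<le> kantorovich d \<mu> \<nu>"
  by (intro kantorovich_greatest expectation_ge_const) auto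

lemma kantorovich_self_nonpos: "(\<And>x. d x x = 0) \<Longrightarrow> kantorovich d \<mu> \<mu> \<le> 0"
proof -
  assume "\<And>x. d x x = 0"
  moreover have "map_pmf (\<lambda>x. (x, x)) \<mu> \<in> couplings \<mu> \<mu>"
    by (simp add: couplings_def pmf.map_comp o_def)
  ultimately show ?thesis using kantorovich_le by fastforce
qed

lemma kantorovich_swap_le:
  assumes "\<And>x y. d x y = d y x"
  shows "kantorovich d \<mu> \<nu> \<le> kantorovich d \<nu> \<mu>"
proof (rule kantorovich_greatest)
  fix c assume "c \<in> couplings \<nu> \<mu>"
  then have "map_pmf prod.swap c \<in> couplings \<mu> \<nu>"
    by (simp add: couplings_def pmf.map_comp o_def)
  then have "kantorovich d \<mu> \<nu> \<le> measure_pmf.expectation (map_pmf prod.swap c) (case_prod d)"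
    by (rule kantorovich_le)
  also have "\<dots> = measure_pmf.expectation c (case_prod d)"
    using assms by (simp add: case_prod_unfold)
  finally show "kantorovich d \<mu> \<nu> \<le> measure_pmf.expectation c (case_prod d)" .
qed

lemma kantorovich_le_glued:
  assumes tri: "\<And>x y z. d x z \<le> d x y + d y z"
    and c1: "c1 \<in> couplings \<mu> \<nu>" and c2: "c2 \<in> couplings \<nu> \<rho>"
  shows "kantorovich d \<mu> \<rho>
    \<le> measure_pmf.expectation c1 (case_prod d) + measure_pmf.expectation c2 (case_prod d)"
proof -
  have "map_pmf snd c1 = map_pmf fst c2" using c1 c2 by (simp add: couplings_def)
  then obtain w where w1: "map_pmf fst w = c1" and w2: "map_pmf snd w = c2"
    and w_glued: "\<And>p1 p2. (p1, p2) \<in> set_pmf w \<Longrightarrow> snd p1 = fst p2"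
    using pmf_gluing by blast
  let ?c = "map_pmf (\<lambda>(p1, p2). (fst p1, snd p2)) w"
  have "map_pmf fst ?c = map_pmf fst c1" "map_pmf snd ?c = map_pmf snd c2"
    unfolding w1[symmetric] w2[symmetric] by (simp_all add: pmf.map_comp o_def case_prod_unfold)
  then have "?c \<in> couplings \<mu> \<rho>" using c1 c2 by (simp add: couplings_def)
  then have "kantorovich d \<mu> \<rho> \<le> measure_pmf.expectation ?c (case_prod d)"
    by (rule kantorovich_le)
  also have "\<dots> = measure_pmf.expectation w (\<lambda>(p1, p2). d (fst p1) (snd p2))"
    by (simp add: case_prod_unfold)
  also have "\<dots> \<le> measure_pmf.expectation w (\<lambda>(p1, p2). case_prod d p1 + case_prod d p2)"
    using tri w_glued by (intro expectation_mono_pmf) (fastforce simp: case_prod_unfold)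
  also have "\<dots>
      = measure_pmf.expectation c1 (case_prod d) + measure_pmf.expectation c2 (case_prod d)"
    unfolding w1[symmetric] w2[symmetric] by (simp add: case_prod_unfold)
  finally show ?thesis .
qed

lemma kantorovich_triangle:
  assumes "\<And>x y z. d x z \<le> d x y + d y z"
  shows "kantorovich d \<mu> \<rho> \<le> kantorovich d \<mu> \<nu> + kantorovich d \<nu> \<rho>"
proof -
  have "kantorovich d \<mu> \<rho> - kantorovich d \<mu> \<nu> \<le> measure_pmf.expectation c2 (case_prod d)"
    if "c2 \<in> couplings \<nu> \<rho>" for c2
  proof -
    have "kantorovich d \<mu> \<rho> - measure_pmf.expectation c2 (case_prod d) \<le> kantorovich d \<mu> \<nu>"
      using kantorovich_le_glued[OF assms _ that] by (intro kantorovich_greatest) force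
    then show ?thesis by simp
  qed
  then have "kantorovich d \<mu> \<rho> - kantorovich d \<mu> \<nu> \<le> kantorovich d \<nu> \<rho>"
    by (rule kantorovich_greatest)
  then show ?thesis by simp
qed

lemma pseudometric_kantorovich: "pseudometric d \<Longrightarrow> pseudometric (kantorovich d)"
  unfolding pseudometric_def
  using kantorovich_nonneg kantorovich_self_nonpos kantorovich_swap_le kantorovich_triangle
  by (metis antisym)

end

section \<open>The robust Bellman operator\<close>

definition worst_expectation ::
  "('q \<Rightarrow> 'a \<Rightarrow> 'q pmf set) \<Rightarrow> ('q \<Rightarrow> real) \<Rightarrow> 'q \<Rightarrow> 'a \<Rightarrow> real" where
  "worst_expectation U f q a = (INF c\<in>U q a. measure_pmf.expectation c f)"

definition robust_bellman ::
  "real \<Rightarrow> ('q \<Rightarrow> 'a::finite \<Rightarrow> real) \<Rightarrow> ('q \<Rightarrow> 'a \<Rightarrow> 'q pmf set)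
    \<Rightarrow> ('q \<Rightarrow> real) \<Rightarrow> 'q \<Rightarrow> real" where
  "robust_bellman \<gamma> Rw U f q = Max (range (\<lambda>a. Rw q a + \<gamma> * worst_expectation U f q a))"

lemma worst_expectation_le:
  fixes f :: "'q::finite \<Rightarrow> real"
  shows "c \<in> U q a \<Longrightarrow> worst_expectation U f q a \<le> measure_pmf.expectation c f"
  unfolding worst_expectation_def by (rule cINF_lower[OF bdd_below_expectations])

lemma worst_expectation_greatest:
  "U q a \<noteq> {} \<Longrightarrow> (\<And>c. c \<in> U q a \<Longrightarrow> m \<le> measure_pmf.expectation c f)
    \<Longrightarrow> m \<le> worst_expectation U f q a"
  unfolding worst_expectation_def by (rule cINF_greatest)

lemma robust_bellman_ge: "Rw q a + \<gamma> * worst_expectation U f q a \<le> robust_bellman \<gamma> Rw U f q"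
  unfolding robust_bellman_def by simp

lemma robust_bellman_attained:
  obtains a where "robust_bellman \<gamma> Rw U f q = Rw q a + \<gamma> * worst_expectation U f q a"
proof -
  have "robust_bellman \<gamma> Rw U f q \<in> range (\<lambda>a. Rw q a + \<gamma> * worst_expectation U f q a)"
    unfolding robust_bellman_def by (rule Max_in) auto
  then show ?thesis using that by blast
qed

lemma worst_expectation_le_shift:
  fixes f g :: "'q::finite \<Rightarrow> real"
  assumes "U q a \<noteq> {}" and "\<And>x. f x \<le> g x + k"
  shows "worst_expectation U f q a \<le> worst_expectation U g q a + k"
proof -
  have "worst_expectation U f q a - k \<le> worst_expectation U g q a"
  proof (rule worst_expectation_greatest)
    show "U q a \<noteq> {}" by (rule assms(1))
    fix c assume "c \<in> U q a"
    then have "worst_expectation U f q a \<le> measure_pmf.expectation c f"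
      by (rule worst_expectation_le)
    also have "\<dots> \<le> measure_pmf.expectation c (\<lambda>x. g x + k)"
      using assms(2) by (rule expectation_mono_pmf)
    finally show "worst_expectation U f q a - k \<le> measure_pmf.expectation c g" by simp
  qed
  then show ?thesis by simp
qed

lemma robust_bellman_contraction:
  fixes f g :: "'q::finite \<Rightarrow> real"
  assumes U: "\<And>q a. U q a \<noteq> {}" and "0 \<le> \<gamma>" and dist: "\<And>x. \<bar>f x - g x\<bar> \<le> k"
  shows "\<bar>robust_bellman \<gamma> Rw U f q - robust_bellman \<gamma> Rw U g q\<bar> \<le> \<gamma> * k"
proof -
  have "robust_bellman \<gamma> Rw U f q \<le> robust_bellman \<gamma> Rw U g q + \<gamma> * k"
    if dist: "\<And>x. \<bar>f x - g x\<bar> \<le> k" for f g :: "'q \<Rightarrow> real"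
  proof -
    obtain a where a: "robust_bellman \<gamma> Rw U f q = Rw q a + \<gamma> * worst_expectation U f q a"
      by (rule robust_bellman_attained)
    have "worst_expectation U f q a \<le> worst_expectation U g q a + k"
      by (intro worst_expectation_le_shift U) (smt (verit) dist)
    then have "\<gamma> * worst_expectation U f q a \<le> \<gamma> * worst_expectation U g q a + \<gamma> * k"
      using \<open>0 \<le> \<gamma>\<close> by (metis distrib_left mult_left_mono)
    then show ?thesis using a robust_bellman_ge[of Rw q a \<gamma> U g] by linarith
  qed
  from this[of f g] this[of g f] dist show ?thesis by (simp add: abs_minus_commute abs_le_iff)
qed

context
  fixes F :: "('q::finite \<Rightarrow> real) \<Rightarrow> 'q \<Rightarrow> real" and \<gamma> :: real
  assumes contraction: "\<And>f g k q. (\<And>x. \<bar>f x - g x\<bar> \<le> k) \<Longrightarrow> \<bar>F f q - F g q\<bar> \<le> \<gamma> * k"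
    and discount: "0 \<le> \<gamma>" "\<gamma> < 1"
begin

lemma contraction_iterates_converge:
  obtains L where "\<And>q. (\<lambda>n. (F ^^ n) start q) \<longlonglongrightarrow> L q"
proof -
  define x where "x n = (F ^^ n) start" for n
  define B where "B = (\<Sum>q\<in>UNIV. \<bar>x (Suc 0) q - x 0 q\<bar>)"
  have step: "\<bar>x (Suc n) q - x n q\<bar> \<le> \<gamma> ^ n * B" for n q
  proof (induction n arbitrary: q)
    case 0
    have "\<bar>x (Suc 0) q - x 0 q\<bar> \<le> B"
      unfolding B_def by (rule member_le_sum[where f = "\<lambda>q. \<bar>x (Suc 0) q - x 0 q\<bar>"]) simp_all
    then show ?case by simp
  next
    case (Suc n)
    have "\<bar>F (x (Suc n)) q - F (x n) q\<bar> \<le> \<gamma> * (\<gamma> ^ n * B)"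
      by (rule contraction) (rule Suc)
    then show ?case by (simp add: x_def)
  qed
  have summable: "summable (\<lambda>n. x (Suc n) q - x n q)" for q
  proof (rule summable_comparison_test')
    show "summable (\<lambda>n. \<gamma> ^ n * B)"
      using discount by (intro summable_mult2 summable_geometric) simp
  qed (use step in simp)
  have "(\<lambda>n. x n q) \<longlonglongrightarrow> x 0 q + (\<Sum>k. x (Suc k) q - x k q)" for q
    using tendsto_add[OF tendsto_const[of "x 0 q"] summable_LIMSEQ[OF summable[of q]]]
    by (simp add: sum_lessThan_telescope[of "\<lambda>i. x i q"])
  then show ?thesis unfolding x_def by (rule that)
qed

lemma contraction_tendsto:
  assumes "\<And>q. (\<lambda>n. x n q) \<longlonglongrightarrow> L q"
  shows "(\<lambda>n. F (x n) q) \<longlonglongrightarrow> F L q"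
proof -
  define e where "e n = (\<Sum>q'\<in>UNIV. \<bar>x n q' - L q'\<bar>)" for n
  have "e \<longlonglongrightarrow> (\<Sum>q'\<in>UNIV. \<bar>L q' - L q'\<bar>)"
    unfolding e_def by (intro tendsto_intros assms)
  then have "(\<lambda>n. \<gamma> * e n) \<longlonglongrightarrow> 0"
    by (simp add: tendsto_mult_right_zero)
  moreover have "\<bar>F (x n) q - F L q\<bar> \<le> \<gamma> * e n" for n
    unfolding e_def
    by (rule contraction, rule member_le_sum[where f = "\<lambda>q'. \<bar>x n q' - L q'\<bar>"]) simp_all
  then have "\<forall>\<^sub>F n in sequentially. norm (F (x n) q - F L q) \<le> \<gamma> * e n"
    by (intro always_eventually allI) simp
  ultimately have "(\<lambda>n. F (x n) q - F L q) \<longlonglongrightarrow> 0"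
    by (rule Lim_null_comparison[rotated])
  then show ?thesis by (simp add: LIM_zero_iff)
qed

lemma contraction_iterates_tendsto_fixpoint:
  obtains L where "F L = L" and "\<And>q. (\<lambda>n. (F ^^ n) start q) \<longlonglongrightarrow> L q"
proof -
  obtain L where lim: "\<And>q. (\<lambda>n. (F ^^ n) start q) \<longlonglongrightarrow> L q"
    using contraction_iterates_converge[of start] by blast
  have "(\<lambda>n. (F ^^ Suc n) start q) \<longlonglongrightarrow> F L q" for q
    using contraction_tendsto[where x = "\<lambda>n. (F ^^ n) start", OF lim] by simp
  moreover have "(\<lambda>n. (F ^^ Suc n) start q) \<longlonglongrightarrow> L q" for q
    using lim by (rule LIMSEQ_Suc)
  ultimately have "F L q = L q" for q by (rule LIMSEQ_unique)
  then have "F L = L" ..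
  then show ?thesis using lim by (rule that)
qed

end

section \<open>The optimal robust value is the fixpoint\<close>

lemma exp_reward_0_expectation:
  "exp_reward Rw Pt pol 0 h q = measure_pmf.expectation (pol h q) (Rw q)"
  by (simp add: expectation_eq_sum_finite)

lemma exp_reward_Suc_expectation:
  "exp_reward Rw Pt pol (Suc n) h q =
    measure_pmf.expectation (pol h q)
      (\<lambda>a. measure_pmf.expectation (Pt q a) (exp_reward Rw Pt pol n (h @ [(q, a)])))"
  by (simp add: expectation_eq_sum_finite)

lemma abs_exp_reward_le:
  assumes "\<And>q a. \<bar>Rw q a\<bar> \<le> B"
  shows "\<bar>exp_reward Rw Pt pol n h q\<bar> \<le> B"
proof (induction n arbitrary: h q)
  case 0
  show ?case unfolding exp_reward_0_expectation by (intro abs_expectation_le assms)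
next
  case (Suc n)
  show ?case unfolding exp_reward_Suc_expectation by (intro abs_expectation_le Suc)
qed

lemma finite_abs_bound:
  fixes Rw :: "'q::finite \<Rightarrow> 'a::finite \<Rightarrow> real"
  obtains B where "\<And>q a. \<bar>Rw q a\<bar> \<le> B"
proof
  show "\<bar>Rw q a\<bar> \<le> Max (range (\<lambda>(q, a). \<bar>Rw q a\<bar>))" for q a
    by (rule Max_ge) (auto intro: image_eqI[of _ _ "(q, a)"])
qed

definition horizon_value ::
  "real \<Rightarrow> ('q::finite \<Rightarrow> 'a::finite \<Rightarrow> real) \<Rightarrow> ('q \<Rightarrow> 'a \<Rightarrow> 'q pmf) \<Rightarrow> ('q, 'a) policy
    \<Rightarrow> nat \<Rightarrow> ('q \<times> 'a) list \<Rightarrow> 'q \<Rightarrow> real" where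
  "horizon_value \<gamma> Rw Pt pol N h q = (\<Sum>n<N. \<gamma> ^ n * exp_reward Rw Pt pol n h q)"

lemma horizon_value_0 [simp]: "horizon_value \<gamma> Rw Pt pol 0 h q = 0"
  by (simp add: horizon_value_def)

lemma horizon_value_Suc:
  "horizon_value \<gamma> Rw Pt pol (Suc N) h q =
    measure_pmf.expectation (pol h q)
      (\<lambda>a. Rw q a +
        \<gamma> * measure_pmf.expectation (Pt q a) (horizon_value \<gamma> Rw Pt pol N (h @ [(q, a)])))"
proof -
  have "horizon_value \<gamma> Rw Pt pol (Suc N) h q =
      exp_reward Rw Pt pol 0 h q + (\<Sum>n<N. \<gamma> ^ Suc n * exp_reward Rw Pt pol (Suc n) h q)"
    unfolding horizon_value_def by (subst sum.lessThan_Suc_shift) simp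
  also have "(\<Sum>n<N. \<gamma> ^ Suc n * exp_reward Rw Pt pol (Suc n) h q) =
      measure_pmf.expectation (pol h q)
        (\<lambda>a. \<gamma> *
          measure_pmf.expectation (Pt q a) (horizon_value \<gamma> Rw Pt pol N (h @ [(q, a)])))"
    by (simp add: exp_reward_Suc_expectation horizon_value_def[abs_def] sum_distrib_left
        mult.assoc Bochner_Integration.integral_sum del: exp_reward.simps)
  finally show ?thesis by (simp add: exp_reward_0_expectation del: exp_reward.simps)
qed

lemma summable_discounted_exp_reward:
  fixes Rw :: "'q::finite \<Rightarrow> 'a::finite \<Rightarrow> real"
  assumes "0 \<le> \<gamma>" "\<gamma> < 1"
  shows "summable (\<lambda>n. \<gamma> ^ n * exp_reward Rw Pt pol n h q)"
proof -
  obtain B where B: "\<And>q a. \<bar>Rw q a\<bar> \<le> B" using finite_abs_bound by blast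
  show ?thesis
  proof (rule summable_comparison_test')
    show "summable (\<lambda>n. \<gamma> ^ n * B)"
      using assms by (intro summable_mult2 summable_geometric) simp
    show "norm (\<gamma> ^ n * exp_reward Rw Pt pol n h q) \<le> \<gamma> ^ n * B" for n
      using abs_exp_reward_le[of Rw B Pt pol n h q] B assms by (simp add: abs_mult mult_left_mono)
  qed
qed

lemma horizon_value_tendsto_policy_value:
  "0 \<le> \<gamma> \<Longrightarrow> \<gamma> < 1
    \<Longrightarrow> (\<lambda>N. horizon_value \<gamma> Rw Pt pol N [] q) \<longlonglongrightarrow> policy_value \<gamma> Rw Pt pol q"
  unfolding horizon_value_def policy_value_def
  by (intro summable_LIMSEQ summable_discounted_exp_reward)

lemma policy_value_ge:
  assumes "0 \<le> \<gamma>" "\<gamma> < 1" and B: "\<And>q a. \<bar>Rw q a\<bar> \<le> B"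
  shows "- B / (1 - \<gamma>) \<le> policy_value \<gamma> Rw Pt pol q"
  unfolding policy_value_def
proof (rule sums_le)
  show "(\<lambda>n. \<gamma> ^ n * - B) sums (- B / (1 - \<gamma>))"
    using sums_mult2[OF geometric_sums, of \<gamma> "- B"] assms by simp
  show "(\<lambda>n. \<gamma> ^ n * exp_reward Rw Pt pol n [] q)
      sums (\<Sum>n. \<gamma> ^ n * exp_reward Rw Pt pol n [] q)"
    using assms by (intro summable_sums summable_discounted_exp_reward)
  show "\<gamma> ^ n * - B \<le> \<gamma> ^ n * exp_reward Rw Pt pol n [] q" for n
    using abs_exp_reward_le[of Rw B Pt pol n "[]" q] B assms
    by (intro mult_left_mono) (auto simp: abs_le_iff)
qed

lemma rect_models_nonempty:
  assumes "\<And>q a. U q a \<noteq> {}"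
  shows "rect_models U \<noteq> {}"
proof -
  have "(\<lambda>q a. SOME c. c \<in> U q a) \<in> rect_models U"
    using assms by (simp add: rect_models_def some_in_eq)
  then show ?thesis by blast
qed

context
  fixes \<gamma> :: real and Rw :: "'q::finite \<Rightarrow> 'a::finite \<Rightarrow> real"
    and U :: "'q \<Rightarrow> 'a \<Rightarrow> 'q pmf set" and L :: "'q \<Rightarrow> real"
  assumes discount: "0 \<le> \<gamma>" "\<gamma> < 1"
    and U_nonempty: "\<And>q a. U q a \<noteq> {}"
    and fixpoint: "robust_bellman \<gamma> Rw U L = L"
begin

lemma tendsto_plus_discounted: "(\<lambda>N. c + \<gamma> ^ N * b) \<longlonglongrightarrow> c"
proof -
  have "(\<lambda>N. \<gamma> ^ N * b) \<longlonglongrightarrow> 0"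
    using discount by (intro tendsto_mult_left_zero LIMSEQ_power_zero) simp
  then show ?thesis using tendsto_add[OF tendsto_const[of c]] by fastforce
qed

lemma robust_value_le_fixpoint: "robust_value \<gamma> Rw U pol q \<le> L q"
proof (rule field_le_epsilon)
  fix \<epsilon> :: real assume "0 < \<epsilon>"
  define M where "M = Max (range (\<lambda>q. \<bar>L q\<bar>))"
  (* Pt is within (1 - gamma) * eps of the worst case against L everywhere; the bound on
     horizon_value below survives a step because gamma * ((1 - gamma) * eps + eps) <= eps. *)
  have "\<exists>c\<in>U q a. measure_pmf.expectation c L < worst_expectation U L q a + (1 - \<gamma>) * \<epsilon>"
    for q a
    using \<open>0 < \<epsilon>\<close> discount unfolding worst_expectation_def
    by (subst cINF_less_iff[symmetric]) (simp_all add: U_nonempty bdd_below_expectations)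
  then obtain Pt where Pt_U: "\<And>q a. Pt q a \<in> U q a"
    and Pt_near:
      "\<And>q a. measure_pmf.expectation (Pt q a) L < worst_expectation U L q a + (1 - \<gamma>) * \<epsilon>"
    by metis
  have horizon: "horizon_value \<gamma> Rw Pt pol N h q \<le> L q + \<epsilon> + \<gamma> ^ N * M" for N h q
  proof (induction N arbitrary: h q)
    case 0
    have "\<bar>L q\<bar> \<le> M" unfolding M_def by (rule Max_ge) auto
    with \<open>0 < \<epsilon>\<close> show ?case by simp
  next
    case (Suc N)
    show ?case
      unfolding horizon_value_Suc
    proof (rule expectation_le_const)
      fix a
      let ?H = "horizon_value \<gamma> Rw Pt pol N (h @ [(q, a)])"
      have "measure_pmf.expectation (Pt q a) ?H
          \<le> measure_pmf.expectation (Pt q a) (\<lambda>q'. L q' + \<epsilon> + \<gamma> ^ N * M)"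
        by (rule expectation_mono_pmf) (rule Suc)
      also have "\<dots> \<le> worst_expectation U L q a + (1 - \<gamma>) * \<epsilon> + (\<epsilon> + \<gamma> ^ N * M)"
        using Pt_near[of q a] by simp
      finally have "\<gamma> * measure_pmf.expectation (Pt q a) ?H
          \<le> \<gamma> * (worst_expectation U L q a + (1 - \<gamma>) * \<epsilon> + (\<epsilon> + \<gamma> ^ N * M))"
        using discount(1) by (rule mult_left_mono)
      moreover have "Rw q a + \<gamma> * worst_expectation U L q a \<le> L q"
        using robust_bellman_ge[of Rw q a \<gamma> U L] fixpoint by simp
      moreover have "\<gamma> * ((1 - \<gamma>) * \<epsilon>) \<le> (1 - \<gamma>) * \<epsilon>"
        using discount \<open>0 < \<epsilon>\<close> by (simp add: mult_left_le_one_le)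
      ultimately show
        "Rw q a + \<gamma> * measure_pmf.expectation (Pt q a) ?H \<le> L q + \<epsilon> + \<gamma> ^ Suc N * M"
        by (simp add: algebra_simps)
    qed
  qed
  have "policy_value \<gamma> Rw Pt pol q \<le> L q + \<epsilon>"
    using horizon
    by (intro LIMSEQ_le[OF horizon_value_tendsto_policy_value[OF discount]
          tendsto_plus_discounted]) auto
  moreover have "robust_value \<gamma> Rw U pol q \<le> policy_value \<gamma> Rw Pt pol q"
  proof -
    obtain B where "\<And>q a. \<bar>Rw q a\<bar> \<le> B" using finite_abs_bound by blast
    then have "bdd_below ((\<lambda>Pt. policy_value \<gamma> Rw Pt pol q) ` rect_models U)"
      using policy_value_ge[OF discount] by (intro bdd_belowI2) blast
    moreover have "Pt \<in> rect_models U" using Pt_U by (simp add: rect_models_def)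
    ultimately show ?thesis unfolding robust_value_def by (rule cINF_lower)
  qed
  ultimately show "robust_value \<gamma> Rw U pol q \<le> L q + \<epsilon>" by simp
qed

lemma fixpoint_le_robust_value:
  obtains pol where "\<And>q. L q \<le> robust_value \<gamma> Rw U pol q"
proof -
  have "\<exists>a. L q = Rw q a + \<gamma> * worst_expectation U L q a" for q
    using robust_bellman_attained[of \<gamma> Rw U L q] fixpoint by metis
  then obtain act where act: "\<And>q. L q = Rw q (act q) + \<gamma> * worst_expectation U L q (act q)"
    by metis
  define pol :: "('q, 'a) policy" where "pol h q = return_pmf (act q)" for h q
  define M where "M = Max (range (\<lambda>q. \<bar>L q\<bar>))"
  have "L q \<le> policy_value \<gamma> Rw Pt pol q" if "Pt \<in> rect_models U" for Pt q
  proof -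
    have Pt_U: "Pt q a \<in> U q a" for q a using that by (simp add: rect_models_def)
    have horizon: "L q - \<gamma> ^ N * M \<le> horizon_value \<gamma> Rw Pt pol N h q" for N h q
    proof (induction N arbitrary: h q)
      case 0
      have "\<bar>L q\<bar> \<le> M" unfolding M_def by (rule Max_ge) auto
      then show ?case by simp
    next
      case (Suc N)
      let ?H = "horizon_value \<gamma> Rw Pt pol N (h @ [(q, act q)])"
      have "worst_expectation U L q (act q) - \<gamma> ^ N * M
          \<le> measure_pmf.expectation (Pt q (act q)) (\<lambda>q'. L q' - \<gamma> ^ N * M)"
        using worst_expectation_le[where U = U and f = L, OF Pt_U] by simp
      also have "\<dots> \<le> measure_pmf.expectation (Pt q (act q)) ?H"
        by (rule expectation_mono_pmf) (rule Suc)
      finally have "\<gamma> * (worst_expectation U L q (act q) - \<gamma> ^ N * M)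
          \<le> \<gamma> * measure_pmf.expectation (Pt q (act q)) ?H"
        using discount(1) by (rule mult_left_mono)
      moreover have "horizon_value \<gamma> Rw Pt pol (Suc N) h q
          = Rw q (act q) + \<gamma> * measure_pmf.expectation (Pt q (act q)) ?H"
        by (simp add: horizon_value_Suc pol_def)
      ultimately show ?case
        using act[of q] by (simp add: right_diff_distrib)
    qed
    show ?thesis
      using horizon
      by (intro LIMSEQ_le[OF tendsto_plus_discounted[of "L q" "- M"]
            horizon_value_tendsto_policy_value[OF discount]]) simp
  qed
  moreover have "rect_models U \<noteq> {}" by (rule rect_models_nonempty) (rule U_nonempty)
  ultimately have "L q \<le> robust_value \<gamma> Rw U pol q" for q
    unfolding robust_value_def by (intro cINF_greatest) auto
  then show ?thesis by (rule that)
qed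

lemma opt_robust_value_eq_fixpoint: "opt_robust_value \<gamma> Rw U q = L q"
proof (rule antisym)
  show "opt_robust_value \<gamma> Rw U q \<le> L q"
    unfolding opt_robust_value_def by (rule cSUP_least) (auto intro: robust_value_le_fixpoint)
  obtain pol where "L q \<le> robust_value \<gamma> Rw U pol q"
    using fixpoint_le_robust_value by blast
  also have "\<dots> \<le> opt_robust_value \<gamma> Rw U q"
    unfolding opt_robust_value_def
    by (rule cSUP_upper) (auto intro!: bdd_aboveI[of _ "L q"] robust_value_le_fixpoint)
  finally show "L q \<le> opt_robust_value \<gamma> Rw U q" .
qed

end

section \<open>The bisimulation metric RMDP\<close>

lemma bisim_unc_nonempty: "bisim_unc P q a \<noteq> {}"
  using pair_pmf_in_couplings by (cases q) (auto simp: bisim_unc_def)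

lemma worst_expectation_bisim_unc:
  "worst_expectation (bisim_unc P) f (s, s') a = kantorovich (curry f) (P s a) (P s' a)"
  by (simp add: worst_expectation_def bisim_unc_def kantorovich_def)

lemma curry_robust_bellman_bisim:
  "curry (robust_bellman \<gamma> (bisim_reward \<gamma> R) (bisim_unc P) f) =
    (\<lambda>s s'. Max (range (\<lambda>a.
      (1 - \<gamma>) * \<bar>R s a - R s' a\<bar> + \<gamma> * kantorovich (curry f) (P s a) (P s' a))))"
  by (intro ext) (unfold curry_conv robust_bellman_def worst_expectation_bisim_unc,
      simp add: bisim_reward_def)

lemma pseudometric_robust_bellman_bisim:
  fixes P :: "'s::finite \<Rightarrow> 'a::finite \<Rightarrow> 's pmf"
  assumes "0 \<le> \<gamma>" "\<gamma> \<le> 1" and "pseudometric (curry f)"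
  shows "pseudometric (curry (robust_bellman \<gamma> (bisim_reward \<gamma> R) (bisim_unc P) f))"
  unfolding curry_robust_bellman_bisim
proof (rule pseudometric_Max, rule pseudometric_add)
  fix a
  show "pseudometric (\<lambda>s s'. (1 - \<gamma>) * \<bar>R s a - R s' a\<bar>)"
    using assms(2) by (intro pseudometric_scale pseudometric_abs_diff) simp
  show "pseudometric (\<lambda>s s'. \<gamma> * kantorovich (curry f) (P s a) (P s' a))"
    using assms(1,3) pseudometric_kantorovich
    by (intro pseudometric_scale
        pseudometric_comp[where d = "kantorovich (curry f)" and g = "\<lambda>s. P s a"])
qed

theorem lemma18:
  fixes P :: "'s::finite \<Rightarrow> 'a::finite \<Rightarrow> 's pmf"
    and R :: "'s \<Rightarrow> 'a \<Rightarrow> real"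
    and s_init :: 's
    and \<gamma> :: real
  assumes "0 < \<gamma>" and "\<gamma> < 1"
  shows "pseudometric (\<lambda>s s'. opt_robust_value \<gamma> (bisim_reward \<gamma> R) (bisim_unc P) (s, s'))"
proof -
  let ?T = "robust_bellman \<gamma> (bisim_reward \<gamma> R) (bisim_unc P)"
  have discount: "0 \<le> \<gamma>" "\<gamma> < 1" using assms by simp_all
  have contraction: "\<bar>?T f q - ?T g q\<bar> \<le> \<gamma> * k" if "\<And>x. \<bar>f x - g x\<bar> \<le> k" for f g k q
    by (intro robust_bellman_contraction bisim_unc_nonempty discount(1) that)
  obtain L where fixpoint: "?T L = L"
    and iterates: "\<And>q. (\<lambda>n. (?T ^^ n) (\<lambda>_. 0) q) \<longlonglongrightarrow> L q"
    using contraction_iterates_tendsto_fixpoint[where F = ?T and start = "\<lambda>_. 0",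
        OF contraction discount] by blast
  have "pseudometric (curry ((?T ^^ n) (\<lambda>_. 0)))" for n
  proof (induction n)
    case 0
    show ?case by (simp add: pseudometric_def)
  next
    case (Suc n)
    have "pseudometric (curry (?T ((?T ^^ n) (\<lambda>_. 0))))"
      by (intro pseudometric_robust_bellman_bisim discount(1) less_imp_le[OF discount(2)] Suc)
    then show ?case by (simp only: funpow.simps(2) comp_apply)
  qed
  then have "pseudometric (curry L)"
    by (rule pseudometric_limit[where d = "\<lambda>n. curry ((?T ^^ n) (\<lambda>_. 0))"])
      (simp add: iterates)
  moreover have "opt_robust_value \<gamma> (bisim_reward \<gamma> R) (bisim_unc P) q = L q" for q
    by (intro opt_robust_value_eq_fixpoint discount bisim_unc_nonempty fixpoint)
  ultimately show ?thesis by (simp add: curry_def)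
qed

end
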